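(* Let $\mathcal{E}\subset\mathbf{P}^3$ be an elliptic quadric over $\mathbf{F}_q$ (the surface $x_0x_3-Q(x_1,x_2)=0$ with $Q$ an irreducible quadratic form over $\mathbf{F}_q$), let $s$ be an integer with $s<q-1$, and let $X=\mathcal{E}\cap\mathcal{S}$ where $\mathcal{S}\subset\mathbf{P}^3$ is a surface of degree $s$ defined over $\mathbf{F}_q$ not containing $\mathcal{E}$. Then $\sharp X(\mathbf{F}_q)\le s(q+1)$.
   Context: $X(\mathbf{F}_q)$ denotes the set of $\mathbf{F}_q$-rational points of $X$. *)

theory Defs
  imports Main "HOL-Library.Cardinality"
begin

type_synonym 'a pt4 = "'a \<times> 'a \<times> 'a \<times> 'a"

text \<open>Exponent vectors of monomials x0^e0 x1^e1 x2^e2 x3^e3 in four variables.\<close>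
type_synonym mon4 = "nat \<times> nat \<times> nat \<times> nat"

text \<open>A polynomial in x0..x3 over 'a is a coefficient function on monomials
  (with finite support).\<close>
type_synonym 'a mpoly4 = "mon4 \<Rightarrow> 'a"

fun mdeg :: "mon4 \<Rightarrow> nat" where
  "mdeg (e0, e1, e2, e3) = e0 + e1 + e2 + e3"

fun madd :: "mon4 \<Rightarrow> mon4 \<Rightarrow> mon4" where
  "madd (a0, a1, a2, a3) (b0, b1, b2, b3) = (a0 + b0, a1 + b1, a2 + b2, a3 + b3)"

fun mon_eval :: "mon4 \<Rightarrow> 'a::comm_ring_1 pt4 \<Rightarrow> 'a" where
  "mon_eval (e0, e1, e2, e3) (x0, x1, x2, x3) = x0 ^ e0 * x1 ^ e1 * x2 ^ e2 * x3 ^ e3"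

definition monomials_of_deg :: "nat \<Rightarrow> mon4 set" where
  "monomials_of_deg s = {m. mdeg m = s}"

definition homog_poly :: "nat \<Rightarrow> 'a::zero mpoly4 \<Rightarrow> bool" where
  "homog_poly s F \<longleftrightarrow> (\<forall>m. F m \<noteq> 0 \<longrightarrow> mdeg m = s)"

definition heval :: "nat \<Rightarrow> 'a::comm_ring_1 mpoly4 \<Rightarrow> 'a pt4 \<Rightarrow> 'a" where
  "heval s F x = (\<Sum>m\<in>monomials_of_deg s. F m * mon_eval m x)"

definition pmult :: "'a::comm_ring_1 mpoly4 \<Rightarrow> 'a mpoly4 \<Rightarrow> 'a mpoly4" where
  "pmult P G m = (\<Sum>(i, j)\<in>{(i, j). madd i j = m}. P i * G j)"

definition pdvd :: "'a::comm_ring_1 mpoly4 \<Rightarrow> 'a mpoly4 \<Rightarrow> bool" where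
  "pdvd P F \<longleftrightarrow> (\<exists>H. finite {m. H m \<noteq> 0} \<and> F = pmult P H)"

text \<open>The binary quadratic form Q(x1,x2) = a x1^2 + b x1 x2 + c x2^2 is irreducible
  over the field: it is not a product of two linear forms with coefficients
  in the field (this also excludes Q = 0).\<close>
definition irred_qform :: "'a::comm_ring_1 \<Rightarrow> 'a \<Rightarrow> 'a \<Rightarrow> bool" where
  "irred_qform a b c \<longleftrightarrow>
     \<not> (\<exists>u v w z. a = u * w \<and> b = u * z + v * w \<and> c = v * z)"

definition quadric_poly :: "'a::comm_ring_1 \<Rightarrow> 'a \<Rightarrow> 'a \<Rightarrow> 'a mpoly4" where
  "quadric_poly a b c m =
     (if m = (1, 0, 0, 1) then 1
      else if m = (0, 2, 0, 0) then - a
      else if m = (0, 1, 1, 0) then - b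
      else if m = (0, 0, 2, 0) then - c
      else 0)"

fun smult4 :: "'a::times \<Rightarrow> 'a pt4 \<Rightarrow> 'a pt4" where
  "smult4 t (x0, x1, x2, x3) = (t * x0, t * x1, t * x2, t * x3)"

definition proj_points3 :: "'a::field pt4 set set" where
  "proj_points3 = {{smult4 t x | t. t \<noteq> 0} | x. x \<noteq> (0, 0, 0, 0)}"

definition X_points :: "'a::field \<Rightarrow> 'a \<Rightarrow> 'a \<Rightarrow> nat \<Rightarrow> 'a mpoly4 \<Rightarrow> 'a pt4 set set" where
  "X_points a b c s F =
     {P \<in> proj_points3. \<forall>x\<in>P. heval 2 (quadric_poly a b c) x = 0 \<and> heval s F x = 0}"

end

theory Submission
  imports Defs "HOL-Algebra.Algebraic_Closure_Type" "HOL-Computational_Algebra.Polynomial"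
begin

(* Over the algebraic closure L of F_q the irreducible form Q splits as
   Q = a (x1 - \<omega> x2)(x1 - \<omega>' x2) with \<omega>' = \<omega>^q \<noteq> \<omega>.  In the chart x0 = 1 the quadric is
   parametrised by (y1,y2) \<mapsto> (1, y1, y2, Q(y1,y2)); in the coordinates z = y1 - \<omega> y2,
   w = y1 - \<omega>' y2 the restriction F(1, y1, y2, Q(y1,y2)) becomes a polynomial P(z,w) of
   degree \<le> s in each variable.  For an F_q-rational pair (y1,y2) we have w = z^q, so the
   affine rational points of X inject (via z) into the roots of G(z) = P(z, z^q).  Since s < q,
   the monomials z^i w^j of P go to distinct monomials z^(i+qj) ("base q digits"), hence
   G \<noteq> 0 as soon as P \<noteq> 0, and deg G \<le> s + qs = s(q+1).  P \<noteq> 0 because otherwise F would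
   vanish on the quadric over the infinite field L and so be divisible by x0 x3 - Q.  The only
   rational point of E at infinity is (0:0:0:1); if it lies on X then the coefficient of
   z^(s+qs) in G vanishes and deg G < s(q+1), which accounts for this extra point. *)


section \<open>Finite fields and the Frobenius map\<close>

lemma card_field_ge_2: "CARD('a::{finite,field}) \<ge> 2"
proof -
  have "card {0::'a, 1} \<le> CARD('a)"
    by (rule card_mono) simp_all
  thus ?thesis by simp
qed

lemma power_card_field:
  fixes x :: "'a::{finite,field}"
  shows "x ^ CARD('a) = x"
proof (cases "x = 0")
  case False
  let ?U = "UNIV - {0::'a}"
  have "(\<Prod>y\<in>?U. x * y) = (\<Prod>y\<in>?U. y)"
    by (rule prod.reindex_bij_witness[of _ "\<lambda>y. y / x" "\<lambda>y. x * y"]) (use False in auto)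
  moreover have "(\<Prod>y\<in>?U. x * y) = x ^ card ?U * (\<Prod>y\<in>?U. y)"
    by (simp add: prod.distrib)
  moreover have "(\<Prod>y\<in>?U. y) \<noteq> 0"
    by simp
  ultimately have "x ^ (CARD('a) - 1) = 1"
    by (simp add: card_Diff_singleton)
  moreover have "CARD('a) = Suc (CARD('a) - 1)"
    using card_field_ge_2[where 'a='a] by simp
  ultimately show ?thesis
    by (metis mult.right_neutral power_Suc)
qed (use card_field_ge_2[where 'a='a] in simp)

text \<open>The inner binomial coefficients of q = #F_q vanish in F_q: the polynomial
  (x+1)^q - x^q - 1 has degree < q but vanishes at all q points of F_q.\<close>
lemma binomial_card_field_eq_0:
  assumes "0 < k" "k < CARD('a::{finite,field})"
  shows "(of_nat (CARD('a) choose k) :: 'a) = 0"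
proof -
  define q where "q = CARD('a)"
  define p :: "'a poly" where "p = (\<Sum>i\<in>{1..<q}. monom (of_nat (q choose i)) i)"
  have roots: "poly p x = 0" for x :: 'a
  proof -
    have "(x + 1) ^ q = (\<Sum>i\<le>q. of_nat (q choose i) * x ^ i * 1 ^ (q - i))"
      by (rule binomial_ring)
    also have "\<dots> = (\<Sum>i\<in>insert 0 (insert q {1..<q}). of_nat (q choose i) * x ^ i)"
      by (intro sum.cong) auto
    also have "\<dots> = 1 + (x ^ q + poly p x)"
      using card_field_ge_2[where 'a='a] by (simp add: p_def poly_sum poly_monom q_def)
    finally show ?thesis
      using power_card_field[of x] power_card_field[of "x + 1"] by (simp add: q_def)
  qed
  have "p = 0"
  proof (rule ccontr)
    assume nz: "p \<noteq> 0"
    have "degree p \<le> q - 1"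
      unfolding p_def by (intro degree_sum_le) (auto intro: order.trans[OF degree_monom_le])
    moreover have "card {x. poly p x = 0} \<le> degree p"
      by (rule card_poly_roots_bound[OF nz])
    moreover have "{x. poly p x = 0} = UNIV"
      using roots by auto
    ultimately show False
      using card_field_ge_2[where 'a='a] unfolding q_def by simp
  qed
  hence "coeff p k = 0" by simp
  moreover have "coeff p k = of_nat (q choose k)"
    using assms unfolding p_def q_def by (simp add: coeff_sum coeff_monom)
  ultimately show ?thesis by (simp add: q_def)
qed

lemma frobenius_add:
  fixes x y :: "'a::{finite,field} alg_closure"
  shows "(x + y) ^ CARD('a) = x ^ CARD('a) + y ^ CARD('a)"
proof -
  define q where "q = CARD('a)"
  have "(x + y) ^ q = (\<Sum>k\<le>q. of_nat (q choose k) * x ^ k * y ^ (q - k))"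
    by (rule binomial_ring)
  also have "\<dots> = (\<Sum>k\<in>{0, q}. of_nat (q choose k) * x ^ k * y ^ (q - k))"
  proof (rule sum.mono_neutral_right)
    show "\<forall>k\<in>{..q} - {0, q}. of_nat (q choose k) * x ^ k * y ^ (q - k) = 0"
    proof
      fix k assume "k \<in> {..q} - {0, q}"
      hence "(of_nat (q choose k) :: 'a) = 0"
        using binomial_card_field_eq_0[of k, where 'a='a] unfolding q_def by auto
      hence "(of_nat (q choose k) :: 'a alg_closure) = 0"
        by (metis to_ac_0 to_ac_of_nat)
      thus "of_nat (q choose k) * x ^ k * y ^ (q - k) = 0" by simp
    qed
  qed auto
  also have "\<dots> = x ^ q + y ^ q"
    using card_field_ge_2[where 'a='a] by (simp add: q_def)
  finally show ?thesis unfolding q_def .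
qed

lemma frobenius_diff:
  fixes x y :: "'a::{finite,field} alg_closure"
  shows "(x - y) ^ CARD('a) = x ^ CARD('a) - y ^ CARD('a)"
  using frobenius_add[of "x - y" y] by simp

lemma frobenius_to_ac: "to_ac x ^ CARD('a) = to_ac (x::'a::{finite,field})"
  by (metis power_card_field to_ac_power)

lemma alg_closed_field_infinite: "infinite (UNIV :: 'a::alg_closed_field set)"
proof
  assume fin: "finite (UNIV :: 'a set)"
  define p :: "'a poly" where "p = (\<Prod>x\<in>UNIV. [:-x, 1:]) + 1"
  have "degree (\<Prod>x\<in>(UNIV::'a set). [:-x, 1:]) = CARD('a)"
    by (subst degree_prod_eq_sum_degree) auto
  moreover have "CARD('a) > 0"
    using fin by (simp add: finite_UNIV_card_ge_0)
  ultimately have "degree p > 0"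
    unfolding p_def by (subst degree_add_eq_left) auto
  then obtain r where "poly p r = 0"
    using alg_closed_imp_poly_has_root by blast
  moreover have "poly (\<Prod>x\<in>(UNIV::'a set). [:-x, 1:]) r = 0"
    by (simp add: poly_prod prod_zero_iff fin)
  ultimately show False unfolding p_def by simp
qed


section \<open>Polynomials in two variables and the substitution w = z^q\<close>

text \<open>A polynomial in z and w is represented as \<open>'b poly poly\<close>: the outer variable is w,
  the coefficients are polynomials in z; \<open>coeff (coeff A j) i\<close> is the coefficient of
  z^i w^j.  \<open>weighted_bideg ni nj k A\<close> says that every monomial z^i w^j of A has
  i \<le> ni, j \<le> nj and i + j = k; the last condition is a weight which is needed to locate
  the top coefficient of the parametrised polynomial.\<close>
definition weighted_bideg :: "nat \<Rightarrow> nat \<Rightarrow> nat \<Rightarrow> 'b::comm_ring_1 poly poly \<Rightarrow> bool" where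
  "weighted_bideg ni nj k A \<longleftrightarrow>
     (\<forall>i j. coeff (coeff A j) i \<noteq> 0 \<longrightarrow> i \<le> ni \<and> j \<le> nj \<and> i + j = k)"

lemma weighted_bideg_mult:
  assumes "weighted_bideg ni nj k A" "weighted_bideg ni' nj' k' B"
  shows "weighted_bideg (ni + ni') (nj + nj') (k + k') (A * B)"
  unfolding weighted_bideg_def
proof (intro allI impI)
  fix i j
  assume nz: "coeff (coeff (A * B) j) i \<noteq> 0"
  have "coeff (coeff (A * B) j) i =
      (\<Sum>u\<le>j. \<Sum>v\<le>i. coeff (coeff A u) v * coeff (coeff B (j - u)) (i - v))"
    by (simp add: coeff_mult coeff_sum)
  with nz obtain u v where uv: "u \<le> j" "v \<le> i"
      "coeff (coeff A u) v * coeff (coeff B (j - u)) (i - v) \<noteq> 0"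
    by (metis (no_types, lifting) atMost_iff sum.neutral)
  hence "coeff (coeff A u) v \<noteq> 0" "coeff (coeff B (j - u)) (i - v) \<noteq> 0"
    by auto
  with assms have "v \<le> ni \<and> u \<le> nj \<and> v + u = k"
      "i - v \<le> ni' \<and> j - u \<le> nj' \<and> (i - v) + (j - u) = k'"
    unfolding weighted_bideg_def by blast+
  with uv show "i \<le> ni + ni' \<and> j \<le> nj + nj' \<and> i + j = k + k'"
    by auto
qed

lemma weighted_bideg_add:
  "weighted_bideg ni nj k A \<Longrightarrow> weighted_bideg ni nj k B \<Longrightarrow> weighted_bideg ni nj k (A + B)"
  unfolding weighted_bideg_def by (metis add.right_neutral coeff_add)

lemma weighted_bideg_diff:
  "weighted_bideg ni nj k A \<Longrightarrow> weighted_bideg ni nj k B \<Longrightarrow> weighted_bideg ni nj k (A - B)"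
  unfolding weighted_bideg_def by (metis coeff_diff diff_self)

lemma weighted_bideg_mono:
  "weighted_bideg ni nj k A \<Longrightarrow> ni \<le> ni' \<Longrightarrow> nj \<le> nj' \<Longrightarrow> weighted_bideg ni' nj' k A"
  unfolding weighted_bideg_def by fastforce

lemma weighted_bideg_one: "weighted_bideg 0 0 0 1"
  unfolding weighted_bideg_def by (auto simp: coeff_1 split: if_splits)

lemma weighted_bideg_const: "weighted_bideg 0 0 0 [:[:c:]:]"
  unfolding weighted_bideg_def by (auto simp: coeff_pCons split: nat.splits)

lemma weighted_bideg_z: "weighted_bideg 1 0 1 [:[:0, 1:]:]"
  unfolding weighted_bideg_def by (auto simp: coeff_pCons split: nat.splits)

lemma weighted_bideg_w: "weighted_bideg 0 1 1 [:0, 1:]"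
  unfolding weighted_bideg_def by (auto simp: coeff_pCons split: nat.splits)

lemma weighted_bideg_power:
  assumes "weighted_bideg ni nj k A"
  shows "weighted_bideg (ni * e) (nj * e) (k * e) (A ^ e)"
proof (induction e)
  case 0
  show ?case
    using weighted_bideg_one by simp
next
  case (Suc e)
  from weighted_bideg_mult[OF assms Suc.IH] show ?case
    by (simp add: add.commute)
qed

definition bideg_le :: "nat \<Rightarrow> 'b::zero poly poly \<Rightarrow> bool" where
  "bideg_le s P \<longleftrightarrow> (\<forall>i j. coeff (coeff P j) i \<noteq> 0 \<longrightarrow> i \<le> s \<and> j \<le> s)"

lemma poly_poly_inner_eval: "poly (poly P p) z = poly (poly P [:poly p z:]) z"
  by (induction P) simp_all

lemma coeff_subst_power:
  fixes P :: "'b::comm_ring_1 poly poly"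
  assumes P: "bideg_le s P" and "s < q" "A < q"
  shows "coeff (poly P (monom 1 q)) (A + q * B) = coeff (coeff P B) A"
proof -
  have "poly P (monom 1 q) = (\<Sum>j\<le>degree P + B. coeff P j * monom 1 q ^ j)"
    by (simp add: poly_altdef sum.mono_neutral_left coeff_eq_0)
  also have "\<dots> = (\<Sum>j\<le>degree P + B. monom 1 (q * j) * coeff P j)"
    by (simp add: monom_power mult.commute)
  finally have "coeff (poly P (monom 1 q)) (A + q * B) =
      (\<Sum>j\<le>degree P + B. if A + q * B < q * j then 0 else coeff (coeff P j) (A + q * B - q * j))"
    by (simp add: coeff_sum coeff_monom_mult cong: if_cong)
  also have "\<dots> = (\<Sum>j\<in>{B}. if A + q * B < q * j then 0 else coeff (coeff P j) (A + q * B - q * j))"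
  proof (rule sum.mono_neutral_right)
    show "\<forall>j\<in>{..degree P + B} - {B}.
        (if A + q * B < q * j then 0 else coeff (coeff P j) (A + q * B - q * j)) = 0"
    proof
      fix j assume j: "j \<in> {..degree P + B} - {B}"
      show "(if A + q * B < q * j then 0 else coeff (coeff P j) (A + q * B - q * j)) = 0"
      proof (cases "j < B")
        case True
        then obtain t where "B = Suc (j + t)"
          using less_imp_Suc_add by blast
        hence "A + q * B - q * j = A + q + q * t"
          by (simp add: algebra_simps)
        hence "\<not> A + q * B - q * j \<le> s"
          using \<open>s < q\<close> by simp
        thus ?thesis
          using P unfolding bideg_le_def by auto
      next
        case False
        with j have "q * Suc B \<le> q * j"
          by (intro mult_le_mono2) auto
        thus ?thesis
          using \<open>A < q\<close> by simp
      qed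
    qed
  qed auto
  finally show ?thesis
    by simp
qed

lemma degree_subst_power:
  fixes P :: "'b::comm_ring_1 poly poly"
  assumes P: "bideg_le s P" and "s < q"
  shows "degree (poly P (monom 1 q)) \<le> s + q * s"
proof (rule degree_le, intro allI impI)
  fix k assume k: "s + q * s < k"
  have k_digits: "k = k mod q + q * (k div q)"
    by simp
  have "coeff (poly P (monom 1 q)) k = coeff (coeff P (k div q)) (k mod q)"
    using coeff_subst_power[OF P \<open>s < q\<close>, of "k mod q" "k div q"] \<open>s < q\<close> k_digits
    by (metis gr_implies_not0 mod_less_divisor not_gr0)
  also have "\<dots> = 0"
  proof (rule ccontr)
    assume "coeff (coeff P (k div q)) (k mod q) \<noteq> 0"
    hence "k mod q \<le> s" "q * (k div q) \<le> q * s"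
      using P unfolding bideg_le_def by auto
    with k_digits k show False
      by linarith
  qed
  finally show "coeff (poly P (monom 1 q)) k = 0" .
qed

lemma subst_power_nonzero:
  fixes P :: "'b::comm_ring_1 poly poly"
  assumes P: "bideg_le s P" and "s < q" and "P \<noteq> 0"
  shows "poly P (monom 1 q) \<noteq> 0"
proof -
  obtain j where "coeff P j \<noteq> 0"
    using \<open>P \<noteq> 0\<close> by (metis leading_coeff_0_iff)
  then obtain i where ij: "coeff (coeff P j) i \<noteq> 0"
    by (metis leading_coeff_0_iff)
  with P \<open>s < q\<close> have "i < q"
    unfolding bideg_le_def by fastforce
  with ij show ?thesis
    using coeff_subst_power[OF P \<open>s < q\<close> \<open>i < q\<close>, of j] by auto
qed

lemma top_coeff_subst_power:
  fixes P :: "'b::comm_ring_1 poly poly"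
  assumes "bideg_le s P" and "s < q"
  shows "coeff (poly P (monom 1 q)) (s + q * s) = coeff (coeff P s) s"
  using coeff_subst_power[OF assms \<open>s < q\<close>] .


section \<open>Polynomials in four variables\<close>

definition rhom :: "('b::comm_ring_1 \<Rightarrow> 'c::comm_ring_1) \<Rightarrow> bool" where
  "rhom f \<longleftrightarrow> (\<forall>x y. f (x + y) = f x + f y) \<and> (\<forall>x y. f (x * y) = f x * f y) \<and> f 1 = 1"

lemma rhom_add: "rhom f \<Longrightarrow> f (x + y) = f x + f y"
  unfolding rhom_def by blast

lemma rhom_mult: "rhom f \<Longrightarrow> f (x * y) = f x * f y"
  unfolding rhom_def by blast

lemma rhom_0: "rhom f \<Longrightarrow> f 0 = 0"
  using rhom_add[of f 0 0] by simp

lemma rhom_sum: "rhom f \<Longrightarrow> f (sum g A) = (\<Sum>x\<in>A. f (g x))"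
  by (induction A rule: infinite_finite_induct) (auto simp: rhom_0 rhom_add)

lemma rhom_power: "rhom f \<Longrightarrow> f (x ^ n) = f x ^ n"
  by (induction n) (auto simp: rhom_def rhom_mult)

lemma rhom_to_ac: "rhom to_ac"
  unfolding rhom_def by simp

definition lift_eval :: "('b::zero \<Rightarrow> 'c::comm_ring_1) \<Rightarrow> 'c \<Rightarrow> 'b poly \<Rightarrow> 'c" where
  "lift_eval f y p = poly (map_poly f p) y"

lemma rhom_lift_eval:
  assumes "rhom f"
  shows "rhom (lift_eval f y)"
proof -
  have "map_poly f (p + p') = map_poly f p + map_poly f p'" for p p'
    by (rule poly_eqI) (simp add: coeff_map_poly rhom_0 rhom_add assms)
  moreover have "map_poly f (p * p') = map_poly f p * map_poly f p'" for p p'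
    by (rule poly_eqI)
       (simp add: coeff_map_poly coeff_mult rhom_0 rhom_sum rhom_mult assms)
  moreover have "f 1 = 1"
    using assms unfolding rhom_def by blast
  ultimately show ?thesis
    unfolding rhom_def lift_eval_def by simp
qed

lemma lift_eval_monom: "rhom f \<Longrightarrow> lift_eval f y (monom c n) = f c * y ^ n"
  by (simp add: lift_eval_def map_poly_monom rhom_0 poly_monom)

lemma lift_eval_nonzero:
  fixes ev :: "'y \<Rightarrow> 'b::zero \<Rightarrow> 'c::field"
  assumes "infinite (UNIV :: 'c set)" and ev0: "\<And>y. ev y 0 = 0"
    and ev_nz: "\<And>c. c \<noteq> 0 \<Longrightarrow> \<exists>y. ev y c \<noteq> 0" and "p \<noteq> 0"
  shows "\<exists>y t. t \<noteq> 0 \<and> lift_eval (ev y) t p \<noteq> 0"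
proof -
  obtain k where "coeff p k \<noteq> 0"
    using \<open>p \<noteq> 0\<close> by (metis leading_coeff_0_iff)
  then obtain y where "ev y (coeff p k) \<noteq> 0"
    using ev_nz by blast
  hence "coeff (map_poly (ev y) p) k \<noteq> 0"
    by (simp add: coeff_map_poly ev0)
  hence "map_poly (ev y) p \<noteq> 0"
    by auto
  hence "finite (insert 0 {t. poly (map_poly (ev y) p) t = 0})"
    using poly_roots_finite by blast
  then obtain t where "t \<notin> insert 0 {t. poly (map_poly (ev y) p) t = 0}"
    using assms(1) ex_new_if_finite by blast
  thus ?thesis
    unfolding lift_eval_def by blast
qed

text \<open>Polynomials in x0, x1, x2, x3 as nested univariate polynomials (x0 outermost).\<close>
type_synonym 'b poly4 = "'b poly poly poly poly"

fun coeff4 :: "'b::zero poly4 \<Rightarrow> mon4 \<Rightarrow> 'b" where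
  "coeff4 p (e0, e1, e2, e3) = coeff (coeff (coeff (coeff p e0) e1) e2) e3"

fun monom4 :: "'b::zero \<Rightarrow> mon4 \<Rightarrow> 'b poly4" where
  "monom4 c (e0, e1, e2, e3) = monom (monom (monom (monom c e3) e2) e1) e0"

fun eval4 :: "'a::field alg_closure pt4 \<Rightarrow> 'a poly4 \<Rightarrow> 'a alg_closure" where
  "eval4 (t, y1, y2, y3) = lift_eval (lift_eval (lift_eval (lift_eval to_ac y3) y2) y1) t"

lemma rhom_eval4: "rhom (eval4 y)"
  by (cases y) (simp add: rhom_lift_eval rhom_to_ac)

lemma eval4_monom4: "eval4 y (monom4 c m) = to_ac c * mon_eval m y"
  by (cases y, cases m) (simp add: lift_eval_monom rhom_lift_eval rhom_to_ac mult_ac)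

declare eval4.simps [simp del]

lemma eval4_nonzero:
  fixes p :: "'a::field poly4"
  assumes "p \<noteq> 0"
  shows "\<exists>t y1 y2 y3. t \<noteq> 0 \<and> eval4 (t, y1, y2, y3) p \<noteq> 0"
proof -
  have inf: "infinite (UNIV :: 'a alg_closure set)"
    by (rule alg_closed_field_infinite)
  have "\<exists>y. lift_eval to_ac y c \<noteq> 0" if "c \<noteq> 0" for c :: "'a poly"
    using lift_eval_nonzero[OF inf, of "\<lambda>(u::unit). to_ac" c] that by auto
  hence "\<exists>y. lift_eval (lift_eval to_ac (snd y)) (fst y) c \<noteq> 0" if "c \<noteq> 0" for c :: "'a poly poly"
    using lift_eval_nonzero[OF inf, of "lift_eval to_ac" c] that
    by (force simp: rhom_0 rhom_lift_eval rhom_to_ac)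
  hence "\<exists>y. lift_eval (lift_eval (lift_eval to_ac (snd (snd y))) (fst (snd y))) (fst y) c \<noteq> 0"
    if "c \<noteq> 0" for c :: "'a poly poly poly"
    using lift_eval_nonzero[OF inf, of "\<lambda>y. lift_eval (lift_eval to_ac (snd y)) (fst y)" c] that
    by (force simp: rhom_0 rhom_lift_eval rhom_to_ac)
  hence "\<exists>y t. t \<noteq> 0 \<and> lift_eval (lift_eval (lift_eval (lift_eval to_ac (snd (snd y)))
      (fst (snd y))) (fst y)) t p \<noteq> 0"
    using lift_eval_nonzero[OF inf, of "\<lambda>y. lift_eval (lift_eval (lift_eval to_ac (snd (snd y)))
      (fst (snd y))) (fst y)" p] assms
    by (force simp: rhom_0 rhom_lift_eval rhom_to_ac)
  thus ?thesis
    by (auto simp: eval4.simps)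
qed

lemma coeff4_monom4: "coeff4 (monom4 c e) m = (if m = e then c else 0)"
  by (cases e, cases m) (auto simp: coeff_monom)

lemma monom4_mult: "monom4 (c::'b::comm_semiring_1) e * monom4 c' e' = monom4 (c * c') (madd e e')"
  by (cases e, cases e') (simp add: mult_monom)

lemma monom4_power: "monom4 (1::'b::comm_semiring_1) (1, 0, 0, 1) ^ k = monom4 1 (k, 0, 0, k)"
proof (induction k)
  case 0
  show ?case by (simp add: monom_eq_1)
next
  case (Suc k)
  thus ?case by (simp add: monom4_mult mult.commute del: monom4.simps)
qed

declare monom4.simps [simp del]

lemma coeff4_add: "coeff4 (p + p') m = coeff4 p m + coeff4 p' m"
  by (cases m) simp

lemma coeff4_diff: "coeff4 (p - p') m = coeff4 p m - coeff4 p' m"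
  by (cases m) simp

lemma coeff4_sum: "coeff4 (sum f A) m = (\<Sum>x\<in>A. coeff4 (f x) m)"
  by (cases m) (simp add: coeff_sum)

lemma finite_support_coeff4: "finite {m. coeff4 (H::'b::zero poly4) m \<noteq> 0}"
proof (rule finite_subset)
  show "{m. coeff4 H m \<noteq> 0} \<subseteq>
      (SIGMA e0:{..degree H}. SIGMA e1:{..degree (coeff H e0)}.
         SIGMA e2:{..degree (coeff (coeff H e0) e1)}. {..degree (coeff (coeff (coeff H e0) e1) e2)})"
  proof
    fix m assume "m \<in> {m. coeff4 H m \<noteq> 0}"
    then obtain e0 e1 e2 e3 where "m = (e0, e1, e2, e3)"
      and "coeff (coeff (coeff (coeff H e0) e1) e2) e3 \<noteq> 0"
      by (cases m) auto
    thus "m \<in> (SIGMA e0:{..degree H}. SIGMA e1:{..degree (coeff H e0)}.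
         SIGMA e2:{..degree (coeff (coeff H e0) e1)}. {..degree (coeff (coeff (coeff H e0) e1) e2)})"
      by (auto intro!: le_degree)
  qed
qed auto

lemma sum_madd_pairs:
  "(\<Sum>(i, j)\<in>{(i, j). madd i j = (n0, n1, n2, n3)}. f i j) =
    (\<Sum>i0\<le>n0. \<Sum>i1\<le>n1. \<Sum>i2\<le>n2. \<Sum>i3\<le>n3. f (i0, i1, i2, i3) (n0 - i0, n1 - i1, n2 - i2, n3 - i3))"
proof -
  define B where "B = {..n0} \<times> {..n1} \<times> {..n2} \<times> {..n3}"
  define g where "g = (\<lambda>(i0::nat, i1::nat, i2::nat, i3::nat).
      ((i0, i1, i2, i3), (n0 - i0, n1 - i1, n2 - i2, n3 - i3)))"
  have "{(i, j). madd i j = (n0, n1, n2, n3)} = g ` B"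
  proof (intro equalityI subsetI)
    fix x assume "x \<in> {(i, j). madd i j = (n0, n1, n2, n3)}"
    then obtain i j where ij: "x = (i, j)" "madd i j = (n0, n1, n2, n3)"
      by auto
    obtain i0 i1 i2 i3 j0 j1 j2 j3 where "i = (i0, i1, i2, i3)" "j = (j0, j1, j2, j3)"
      by (cases i, cases j) auto
    with ij show "x \<in> g ` B"
      unfolding B_def g_def by (intro image_eqI[of _ _ "(i0, i1, i2, i3)"]) auto
  qed (auto simp: B_def g_def)
  moreover have "inj_on g B"
    unfolding g_def inj_on_def by auto
  ultimately have "(\<Sum>(i, j)\<in>{(i, j). madd i j = (n0, n1, n2, n3)}. f i j) = (\<Sum>x\<in>B. case_prod f (g x))"
    by (simp add: sum.reindex)
  also have "\<dots> = (\<Sum>i0\<le>n0. \<Sum>i1\<le>n1. \<Sum>i2\<le>n2. \<Sum>i3\<le>n3.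
      f (i0, i1, i2, i3) (n0 - i0, n1 - i1, n2 - i2, n3 - i3))"
    unfolding B_def g_def by (simp add: sum.cartesian_product) (auto intro!: sum.cong split: prod.splits)
  finally show ?thesis .
qed

lemma coeff4_mult: "coeff4 (p * p') m = pmult (coeff4 p) (coeff4 p') m"
proof (cases m)
  case (fields n0 n1 n2 n3)
  have "coeff4 (p * p') (n0, n1, n2, n3) =
      (\<Sum>i0\<le>n0. \<Sum>i1\<le>n1. \<Sum>i2\<le>n2. \<Sum>i3\<le>n3.
         coeff4 p (i0, i1, i2, i3) * coeff4 p' (n0 - i0, n1 - i1, n2 - i2, n3 - i3))"
    by (simp add: coeff_mult coeff_sum)
  thus ?thesis
    unfolding fields pmult_def sum_madd_pairs .
qed


lemma finite_monomials_of_deg: "finite (monomials_of_deg s)"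
  by (rule finite_subset[of _ "{..s} \<times> {..s} \<times> {..s} \<times> {..s}"])
     (auto simp: monomials_of_deg_def)

definition poly4_of :: "nat \<Rightarrow> 'b::comm_monoid_add mpoly4 \<Rightarrow> 'b poly4" where
  "poly4_of s F = (\<Sum>m\<in>monomials_of_deg s. monom4 (F m) m)"

lemma coeff4_poly4_of:
  assumes "homog_poly s F"
  shows "coeff4 (poly4_of s F) m = F m"
proof -
  have "coeff4 (poly4_of s F) m = (\<Sum>e\<in>monomials_of_deg s. if m = e then F e else 0)"
    unfolding poly4_of_def by (simp add: coeff4_sum coeff4_monom4)
  also have "\<dots> = (if m \<in> monomials_of_deg s then F m else 0)"
    using finite_monomials_of_deg by (simp add: sum.delta)
  also have "\<dots> = F m"
    using assms unfolding homog_poly_def monomials_of_deg_def by (cases m) auto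
  finally show ?thesis .
qed

definition qform :: "'b::comm_ring_1 \<Rightarrow> 'b \<Rightarrow> 'b \<Rightarrow> 'b \<Rightarrow> 'b \<Rightarrow> 'b" where
  "qform a b c y1 y2 = a * y1 ^ 2 + b * y1 * y2 + c * y2 ^ 2"

lemma heval_quadric_poly:
  "heval 2 (quadric_poly a b c) (x0, x1, x2, x3) = x0 * x3 - qform a b c x1 x2"
proof -
  let ?S = "{(1, 0, 0, 1), (0, 2, 0, 0), (0, 1, 1, 0), (0, 0, 2, 0)} :: mon4 set"
  have "heval 2 (quadric_poly a b c) (x0, x1, x2, x3) =
      (\<Sum>m\<in>?S. quadric_poly a b c m * mon_eval m (x0, x1, x2, x3))"
    unfolding heval_def
    by (rule sum.mono_neutral_right[OF finite_monomials_of_deg])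
       (auto simp: monomials_of_deg_def quadric_poly_def)
  thus ?thesis
    by (simp add: quadric_poly_def qform_def algebra_simps)
qed

lemma heval_at_infinity: "heval s F (0, 0, 0, 1) = F (0, 0, 0, s)"
proof -
  have "heval s F (0, 0, 0, 1) = (\<Sum>m\<in>{(0, 0, 0, s)}. F m * mon_eval m (0, 0, 0, 1))"
    unfolding heval_def
  proof (rule sum.mono_neutral_right[OF finite_monomials_of_deg])
    show "\<forall>m\<in>monomials_of_deg s - {(0, 0, 0, s)}. F m * mon_eval m (0, 0, 0, 1) = 0"
    proof
      fix m assume m: "m \<in> monomials_of_deg s - {(0, 0, 0, s)}"
      obtain e0 e1 e2 e3 where me: "m = (e0, e1, e2, e3)"
        by (cases m) auto
      from m me have "e0 \<noteq> 0 \<or> e1 \<noteq> 0 \<or> e2 \<noteq> 0"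
        by (auto simp: monomials_of_deg_def)
      thus "F m * mon_eval m (0, 0, 0, 1) = 0"
        by (auto simp: me zero_power)
    qed
  qed (simp add: monomials_of_deg_def)
  thus ?thesis by simp
qed

lemma rhom_heval:
  assumes "rhom f"
  shows "f (heval s G (x0, x1, x2, x3)) = heval s (\<lambda>m. f (G m)) (f x0, f x1, f x2, f x3)"
proof -
  have "f (mon_eval m (x0, x1, x2, x3)) = mon_eval m (f x0, f x1, f x2, f x3)" for m
    by (cases m) (simp add: rhom_mult[OF assms] rhom_power[OF assms])
  thus ?thesis
    unfolding heval_def by (simp add: rhom_sum[OF assms] rhom_mult[OF assms])
qed

section \<open>Forms vanishing on a quadric are divisible by it\<close>

context
  fixes a b c :: "'a::field"
begin

definition form4 :: "'a poly4" where
  "form4 = monom4 a (0, 2, 0, 0) + monom4 b (0, 1, 1, 0) + monom4 c (0, 0, 2, 0)"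

definition quadric4 :: "'a poly4" where
  "quadric4 = monom4 1 (1, 0, 0, 1) - form4"

lemma coeff4_quadric4: "coeff4 quadric4 = quadric_poly a b c"
  by (rule ext) (simp add: quadric4_def form4_def quadric_poly_def coeff4_diff coeff4_add coeff4_monom4)

text \<open>Replacing x0 x3 by Q in x0^s F: the monomial x0^e0 x1^e1 x2^e2 x3^e3 of x0^s F becomes
  x0^(s+e0-e3) x1^e1 x2^e2 Q^e3, which no longer involves x3.\<close>
definition quadric_reduction :: "nat \<Rightarrow> 'a mpoly4 \<Rightarrow> 'a poly4" where
  "quadric_reduction s F = (\<Sum>m\<in>monomials_of_deg s.
     (case m of (e0, e1, e2, e3) \<Rightarrow> monom4 (F m) (s + e0 - e3, e1, e2, 0) * form4 ^ e3))"

lemma quadric4_dvd_reduction: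
  "quadric4 dvd monom4 1 (s, 0, 0, 0) * poly4_of s F - quadric_reduction s F"
proof -
  have "monom4 1 (s, 0, 0, 0) * poly4_of s F - quadric_reduction s F =
      (\<Sum>m\<in>monomials_of_deg s. monom4 1 (s, 0, 0, 0) * monom4 (F m) m -
        (case m of (e0, e1, e2, e3) \<Rightarrow> monom4 (F m) (s + e0 - e3, e1, e2, 0) * form4 ^ e3))"
    unfolding poly4_of_def quadric_reduction_def by (simp add: sum_distrib_left sum_subtractf)
  also have "quadric4 dvd \<dots>"
  proof (rule dvd_sum)
    fix m assume m: "m \<in> monomials_of_deg s"
    obtain e0 e1 e2 e3 where me: "m = (e0, e1, e2, e3)"
      by (cases m) auto
    have "e3 \<le> s"
      using m me by (simp add: monomials_of_deg_def)
    hence "monom4 1 (s, 0, 0, 0) * monom4 (F m) m =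
        monom4 (F m) (s + e0 - e3, e1, e2, 0) * monom4 1 (1, 0, 0, 1) ^ e3"
      unfolding monom4_power by (simp add: me monom4_mult)
    moreover have "quadric4 dvd monom4 1 (1, 0, 0, 1) ^ e3 - form4 ^ e3"
      unfolding quadric4_def power_diff_sumr2 by simp
    ultimately show "quadric4 dvd monom4 1 (s, 0, 0, 0) * monom4 (F m) m -
        (case m of (e0, e1, e2, e3) \<Rightarrow> monom4 (F m) (s + e0 - e3, e1, e2, 0) * form4 ^ e3)"
      by (simp add: me right_diff_distrib[symmetric])
  qed
  finally show ?thesis .
qed

lemma eval4_form4: "eval4 (t, y1, y2, y3) form4 = qform (to_ac a) (to_ac b) (to_ac c) y1 y2"
  unfolding form4_def qform_def by (simp add: rhom_add[OF rhom_eval4] eval4_monom4 mult_ac)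

text \<open>The reduction is the dehomogenisation of F on the quadric, rehomogenised in t.\<close>
lemma eval4_quadric_reduction:
  assumes "t \<noteq> 0"
  shows "eval4 (t, y1, y2, y3) (quadric_reduction s F) =
    t ^ (2 * s) * heval s (\<lambda>m. to_ac (F m))
      (1, y1 / t, y2 / t, qform (to_ac a) (to_ac b) (to_ac c) (y1 / t) (y2 / t))"
  unfolding quadric_reduction_def heval_def rhom_sum[OF rhom_eval4] sum_distrib_left
proof (rule sum.cong[OF refl])
  fix m assume m: "m \<in> monomials_of_deg s"
  obtain e0 e1 e2 e3 where me: "m = (e0, e1, e2, e3)"
    by (cases m) auto
  let ?Q = "qform (to_ac a) (to_ac b) (to_ac c)"
  have "2 * s = (s + e0 - e3) + e1 + e2 + 2 * e3"
    using m me by (simp add: monomials_of_deg_def)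
  hence t_power: "t ^ (2 * s) = t ^ (s + e0 - e3) * t ^ e1 * t ^ e2 * (t ^ 2) ^ e3"
    by (simp only: power_add power_mult)
  have Q_scaled: "?Q (y1 / t) (y2 / t) = ?Q y1 y2 / t ^ 2"
    unfolding qform_def using assms by (simp add: field_simps power2_eq_square)
  show "eval4 (t, y1, y2, y3)
      (case m of (e0, e1, e2, e3) \<Rightarrow> monom4 (F m) (s + e0 - e3, e1, e2, 0) * form4 ^ e3) =
    t ^ (2 * s) * (to_ac (F m) * mon_eval m (1, y1 / t, y2 / t, ?Q (y1 / t) (y2 / t)))"
    unfolding me t_power Q_scaled using assms
    by (simp add: rhom_mult[OF rhom_eval4] rhom_power[OF rhom_eval4] eval4_monom4 eval4_form4
        power_divide field_simps)
qed

lemma quadric_reduction_eq_0: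
  assumes "\<And>y1 y2. heval s (\<lambda>m. to_ac (F m)) (1, y1, y2, qform (to_ac a) (to_ac b) (to_ac c) y1 y2) = 0"
  shows "quadric_reduction s F = 0"
proof (rule ccontr)
  assume "quadric_reduction s F \<noteq> 0"
  then obtain t y1 y2 y3 where "t \<noteq> 0" and "eval4 (t, y1, y2, y3) (quadric_reduction s F) \<noteq> 0"
    using eval4_nonzero by blast
  moreover have "eval4 (t, y1, y2, y3) (quadric_reduction s F) = 0"
    unfolding eval4_quadric_reduction[OF \<open>t \<noteq> 0\<close>] assms by simp
  ultimately show False
    by simp
qed

text \<open>If Q \<noteq> 0 in the chart x0 = 0 (here: a \<noteq> 0) the quadric is coprime to x0.\<close>
lemma quadric4_dvd_cancel_x0:
  assumes "a \<noteq> 0" and "quadric4 dvd monom4 1 (k, 0, 0, 0) * A"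
  shows "quadric4 dvd A"
  using assms(2)
proof (induction k arbitrary: A)
  case 0
  thus ?case by (simp add: monom4.simps monom_eq_1)
next
  case (Suc k)
  have "coeff4 quadric4 (0, 2, 0, 0) \<noteq> 0"
    using assms(1) by (simp add: coeff4_quadric4 quadric_poly_def)
  hence coeff_0: "coeff quadric4 0 \<noteq> 0"
    by (metis coeff4.simps coeff_0)
  have "monom4 1 (Suc k, 0, 0, 0) * A = pCons 0 (monom4 1 (k, 0, 0, 0) * A)"
    by (simp add: monom4.simps monom_Suc monom_eq_1 mult_pCons_left)
  with Suc.prems obtain H where H: "pCons 0 (monom4 1 (k, 0, 0, 0) * A) = quadric4 * H"
    by (metis dvdE)
  have "coeff (quadric4 * H) 0 = 0"
    using H[symmetric] by simp
  hence "coeff H 0 = 0"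
    using coeff_0 by (simp add: coeff_mult)
  then obtain H' where "H = pCons 0 H'"
    by (metis pCons_cases coeff_pCons_0)
  with H have "monom4 1 (k, 0, 0, 0) * A = quadric4 * H'"
    by (simp add: mult_pCons_right)
  hence "quadric4 dvd monom4 1 (k, 0, 0, 0) * A"
    by simp
  thus ?case
    by (rule Suc.IH)
qed

theorem pdvd_quadric_if_vanishing:
  assumes "a \<noteq> 0" and F: "homog_poly s F"
    and vanish: "\<And>y1 y2. heval s (\<lambda>m. to_ac (F m)) (1, y1, y2, qform (to_ac a) (to_ac b) (to_ac c) y1 y2) = 0"
  shows "pdvd (quadric_poly a b c) F"
proof -
  have "quadric4 dvd monom4 1 (s, 0, 0, 0) * poly4_of s F"
    using quadric4_dvd_reduction[of s F] quadric_reduction_eq_0[OF vanish] by simp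
  hence "quadric4 dvd poly4_of s F"
    by (rule quadric4_dvd_cancel_x0[OF \<open>a \<noteq> 0\<close>])
  then obtain H where H: "poly4_of s F = quadric4 * H"
    by (rule dvdE)
  have "F = pmult (quadric_poly a b c) (coeff4 H)"
  proof
    fix m
    have "F m = coeff4 (quadric4 * H) m"
      using coeff4_poly4_of[OF F, of m] by (simp only: H)
    thus "F m = pmult (quadric_poly a b c) (coeff4 H) m"
      by (simp only: coeff4_mult coeff4_quadric4)
  qed
  thus ?thesis
    unfolding pdvd_def using finite_support_coeff4 by blast
qed

end


section \<open>The elliptic quadric over a finite field\<close>

locale elliptic_quadric =
  fixes a b c :: "'a::{finite,field}"
  assumes irred: "irred_qform a b c"
begin

abbreviation QL :: "'a alg_closure \<Rightarrow> 'a alg_closure \<Rightarrow> 'a alg_closure" where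
  "QL \<equiv> qform (to_ac a) (to_ac b) (to_ac c)"

lemma a_nonzero: "a \<noteq> 0"
proof
  assume "a = 0"
  hence "a = 0 * b \<and> b = 0 * c + 1 * b \<and> c = 1 * c"
    by simp
  thus False
    using irred unfolding irred_qform_def by blast
qed

lemma no_rational_root: "a * t ^ 2 + b * t + c \<noteq> 0"
proof
  assume "a * t ^ 2 + b * t + c = 0"
  hence "a = 1 * a \<and> b = 1 * (a * t + b) + (- t) * a \<and> c = (- t) * (a * t + b)"
    by (simp add: algebra_simps power2_eq_square) (metis add.commute add_diff_cancel_left' diff_0 diff_diff_eq2)
  thus False
    using irred unfolding irred_qform_def by blast
qed

text \<open>Q is anisotropic over F_q, so E has no rational points with x0 = 0 other than (0:0:0:1).\<close>
lemma anisotropic: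
  assumes "qform a b c x1 x2 = 0"
  shows "x1 = 0 \<and> x2 = 0"
proof (cases "x2 = 0")
  case True
  thus ?thesis
    using assms a_nonzero by (simp add: qform_def)
next
  case False
  have "a * (x1 / x2) ^ 2 + b * (x1 / x2) + c = qform a b c x1 x2 / x2 ^ 2"
    using False by (simp add: qform_def field_simps power2_eq_square)
  with assms have "a * (x1 / x2) ^ 2 + b * (x1 / x2) + c = 0"
    by simp
  thus ?thesis
    using no_rational_root[of "x1 / x2"] by contradiction
qed

definition \<omega> :: "'a alg_closure" where
  "\<omega> = (SOME x. to_ac a * x ^ 2 + to_ac b * x + to_ac c = 0)"

lemma \<omega>_root: "to_ac a * \<omega> ^ 2 + to_ac b * \<omega> + to_ac c = 0"
proof -
  define f where "f = (\<lambda>k::nat. if k = 0 then to_ac c else if k = 1 then to_ac b else to_ac a)"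
  obtain x where "(\<Sum>k\<le>2. f k * x ^ k) = 0"
    using alg_closed[of 2 f] by (auto simp: f_def a_nonzero)
  hence "to_ac a * x ^ 2 + to_ac b * x + to_ac c = 0"
    by (simp add: f_def numeral_2_eq_2 atMost_Suc algebra_simps)
  thus ?thesis
    unfolding \<omega>_def by (rule someI)
qed

lemma \<omega>_not_rational: "\<omega> \<noteq> to_ac t"
proof
  assume "\<omega> = to_ac t"
  hence "to_ac (a * t ^ 2 + b * t + c) = 0"
    using \<omega>_root by simp
  thus False
    using no_rational_root by (simp only: to_ac_eq_0_iff)
qed

definition \<omega>' :: "'a alg_closure" where
  "\<omega>' = \<omega> ^ CARD('a)"

lemma \<omega>'_root: "to_ac a * \<omega>' ^ 2 + to_ac b * \<omega>' + to_ac c = 0"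
proof -
  have "(to_ac a * \<omega> ^ 2 + to_ac b * \<omega> + to_ac c) ^ CARD('a) = to_ac a * \<omega>' ^ 2 + to_ac b * \<omega>' + to_ac c"
    unfolding \<omega>'_def
    by (simp add: frobenius_add power_mult_distrib frobenius_to_ac flip: power_mult)
       (simp add: power_mult mult.commute)
  thus ?thesis
    using \<omega>_root card_field_ge_2[where 'a='a] by (simp add: power_0_left)
qed

text \<open>\<omega> is not fixed by Frobenius: otherwise x^q - x would have the q + 1 roots F_q \<union> {\<omega>}.\<close>
lemma \<omega>'_neq_\<omega>: "\<omega>' \<noteq> \<omega>"
proof
  assume fixed: "\<omega>' = \<omega>"
  define p :: "'a alg_closure poly" where "p = monom 1 CARD('a) + [:0, -1:]"
  have deg: "degree p = CARD('a)"
    unfolding p_def using card_field_ge_2[where 'a='a]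
    by (subst degree_add_eq_left) (auto simp: degree_monom_eq)
  hence "p \<noteq> 0"
    using card_field_ge_2[where 'a='a] by auto
  have "insert \<omega> (range to_ac) \<subseteq> {x. poly p x = 0}"
    using fixed by (auto simp: p_def poly_monom \<omega>'_def frobenius_to_ac)
  hence "card (insert \<omega> (range (to_ac :: 'a \<Rightarrow> _))) \<le> card {x. poly p x = 0}"
    by (rule card_mono[OF poly_roots_finite[OF \<open>p \<noteq> 0\<close>]])
  also have "\<dots> \<le> CARD('a)"
    using card_poly_roots_bound[OF \<open>p \<noteq> 0\<close>] deg by simp
  moreover have "\<omega> \<notin> range to_ac"
    using \<omega>_not_rational by auto
  ultimately show False
    by (simp add: card_insert_disjoint card_image inj_to_ac)
qed

lemma QL_split: "QL y1 y2 = to_ac a * (y1 - \<omega> * y2) * (y1 - \<omega>' * y2)"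
proof -
  have "(to_ac a * \<omega> ^ 2 + to_ac b * \<omega> + to_ac c) - (to_ac a * \<omega>' ^ 2 + to_ac b * \<omega>' + to_ac c) = 0"
    using \<omega>_root \<omega>'_root by simp
  hence "(\<omega> - \<omega>') * (to_ac a * (\<omega> + \<omega>') + to_ac b) = 0"
    by (simp add: algebra_simps power2_eq_square)
  hence "to_ac a * (\<omega> + \<omega>') + to_ac b = 0"
    using \<omega>'_neq_\<omega> by simp
  hence sum: "to_ac b = - to_ac a * (\<omega> + \<omega>')"
    by (metis add.commute add_eq_0_iff2 mult_minus_left)
  have "to_ac c = - (to_ac a * \<omega> ^ 2 + to_ac b * \<omega>)"
    using \<omega>_root by (simp add: eq_neg_iff_add_eq_0 algebra_simps)
  also have "\<dots> = to_ac a * \<omega> * \<omega>'"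
    unfolding sum by (simp add: algebra_simps power2_eq_square)
  finally have prod: "to_ac c = to_ac a * \<omega> * \<omega>'" .
  show ?thesis
    unfolding qform_def sum prod by (simp add: algebra_simps power2_eq_square)
qed

end


lemma rhom_poly_poly: "rhom (\<lambda>P. poly (poly P [:w:]) z)"
  unfolding rhom_def by simp

lemma coeff_heval_nonzero:
  fixes xs :: "'b::comm_ring_1 poly poly pt4"
  assumes "coeff (coeff (heval s G xs) j) i \<noteq> 0"
  shows "\<exists>m\<in>monomials_of_deg s. coeff (coeff (G m * mon_eval m xs) j) i \<noteq> 0"
proof -
  have "coeff (coeff (heval s G xs) j) i =
      (\<Sum>m\<in>monomials_of_deg s. coeff (coeff (G m * mon_eval m xs) j) i)"
    unfolding heval_def by (simp add: coeff_sum)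
  with assms show ?thesis
    by (metis (no_types, lifting) sum.neutral)
qed

context elliptic_quadric
begin

text \<open>The coordinates (1, y1, y2, Q(y1,y2)) of the quadric as polynomials in
  z = y1 - \<omega> y2 (inner variable) and w = y1 - \<omega>' y2 (outer variable).\<close>
definition y2_poly :: "'a alg_closure poly poly" where
  "y2_poly = [:[:1 / (\<omega> - \<omega>'):]:] * ([:0, 1:] - [:[:0, 1:]:])"

definition param_coords :: "'a alg_closure poly poly pt4" where
  "param_coords = (1, [:[:0, 1:]:] + [:[:\<omega>:]:] * y2_poly, y2_poly, [:[:to_ac a:]:] * [:[:0, 1:]:] * [:0, 1:])"

definition param_poly :: "nat \<Rightarrow> 'a mpoly4 \<Rightarrow> 'a alg_closure poly poly" where
  "param_poly s F = heval s (\<lambda>m. [:[:to_ac (F m):]:]) param_coords"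

lemma eval_param_poly:
  "poly (poly (param_poly s F) [:w:]) z =
     heval s (\<lambda>m. to_ac (F m)) (1, z + \<omega> * ((w - z) / (\<omega> - \<omega>')), (w - z) / (\<omega> - \<omega>'), to_ac a * z * w)"
proof -
  have y2: "poly (poly y2_poly [:w:]) z = (w - z) / (\<omega> - \<omega>')"
    by (simp add: y2_poly_def diff_divide_distrib)
  have x1: "poly (poly ([:[:0, 1:]:] + [:[:\<omega>:]:] * y2_poly) [:w:]) z = z + \<omega> * ((w - z) / (\<omega> - \<omega>'))"
    by (simp add: y2)
  have x3: "poly (poly ([:[:to_ac a:]:] * [:[:0, 1:]:] * [:0, 1:]) [:w:]) z = to_ac a * z * w"
    by simp
  show ?thesis
    unfolding param_poly_def param_coords_def rhom_heval[OF rhom_poly_poly] y2 x1 x3 by simp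
qed

lemma weighted_bideg_param_coords:
  "weighted_bideg 1 1 1 y2_poly"
  "weighted_bideg 1 1 1 ([:[:0, 1:]:] + [:[:\<omega>:]:] * y2_poly)"
  "weighted_bideg 1 1 2 ([:[:to_ac a:]:] * [:[:0, 1:]:] * [:0, 1:])"
proof -
  have z: "weighted_bideg 1 1 1 [:[:0, 1:]:]"
    by (rule weighted_bideg_mono[OF weighted_bideg_z]) simp_all
  have w: "weighted_bideg 1 1 1 [:0, 1:]"
    by (rule weighted_bideg_mono[OF weighted_bideg_w]) simp_all
  have "weighted_bideg (0 + 1) (0 + 1) (0 + 1) y2_poly"
    unfolding y2_poly_def by (intro weighted_bideg_mult weighted_bideg_const weighted_bideg_diff w z)
  thus y2: "weighted_bideg 1 1 1 y2_poly"
    by simp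
  have "weighted_bideg (0 + 1) (0 + 1) (0 + 1) ([:[:\<omega>:]:] * y2_poly)"
    by (intro weighted_bideg_mult weighted_bideg_const y2)
  thus "weighted_bideg 1 1 1 ([:[:0, 1:]:] + [:[:\<omega>:]:] * y2_poly)"
    by (intro weighted_bideg_add z) simp
  have "weighted_bideg (0 + 1 + 0) (0 + 0 + 1) (0 + 1 + 1) ([:[:to_ac a:]:] * [:[:0, 1:]:] * [:0, 1:])"
    by (intro weighted_bideg_mult weighted_bideg_const weighted_bideg_z weighted_bideg_w)
  thus "weighted_bideg 1 1 2 ([:[:to_ac a:]:] * [:[:0, 1:]:] * [:0, 1:])"
    by (simp add: numeral_2_eq_2)
qed

lemma weighted_bideg_param_term:
  "weighted_bideg (e1 + e2 + e3) (e1 + e2 + e3) (e1 + e2 + 2 * e3)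
     ([:[:u:]:] * mon_eval (e0, e1, e2, e3) param_coords)"
proof -
  have "weighted_bideg (0 + (0 * e0 + 1 * e1 + 1 * e2 + 1 * e3)) (0 + (0 * e0 + 1 * e1 + 1 * e2 + 1 * e3))
      (0 + (0 * e0 + 1 * e1 + 1 * e2 + 2 * e3)) ([:[:u:]:] * mon_eval (e0, e1, e2, e3) param_coords)"
    unfolding param_coords_def mon_eval.simps
    by (intro weighted_bideg_mult weighted_bideg_const weighted_bideg_power weighted_bideg_one
        weighted_bideg_param_coords)
  thus ?thesis
    by simp
qed

lemma bideg_param_poly: "bideg_le s (param_poly s F)"
  unfolding bideg_le_def
proof (intro allI impI)
  fix i j assume "coeff (coeff (param_poly s F) j) i \<noteq> 0"
  then obtain m where m: "m \<in> monomials_of_deg s"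
      "coeff (coeff ([:[:to_ac (F m):]:] * mon_eval m param_coords) j) i \<noteq> 0"
    unfolding param_poly_def by (blast dest: coeff_heval_nonzero)
  obtain e0 e1 e2 e3 where me: "m = (e0, e1, e2, e3)"
    by (cases m) auto
  from m me weighted_bideg_param_term[of e1 e2 e3 "to_ac (F m)" e0]
  have "i \<le> e1 + e2 + e3 \<and> j \<le> e1 + e2 + e3"
    unfolding weighted_bideg_def by blast
  moreover have "e0 + e1 + e2 + e3 = s"
    using m(1) me by (simp add: monomials_of_deg_def)
  ultimately show "i \<le> s \<and> j \<le> s"
    by simp
qed

text \<open>Only the monomial x3^s contributes to z^s w^s.\<close>
lemma param_poly_top_coeff:
  assumes "F (0, 0, 0, s) = 0"
  shows "coeff (coeff (param_poly s F) s) s = 0"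
proof (rule ccontr)
  assume "coeff (coeff (param_poly s F) s) s \<noteq> 0"
  then obtain m where m: "m \<in> monomials_of_deg s"
      "coeff (coeff ([:[:to_ac (F m):]:] * mon_eval m param_coords) s) s \<noteq> 0"
    unfolding param_poly_def by (blast dest: coeff_heval_nonzero)
  obtain e0 e1 e2 e3 where me: "m = (e0, e1, e2, e3)"
    by (cases m) auto
  from m me weighted_bideg_param_term[of e1 e2 e3 "to_ac (F m)" e0]
  have "s \<le> e1 + e2 + e3 \<and> s + s = e1 + e2 + 2 * e3"
    unfolding weighted_bideg_def by blast
  moreover have "e0 + e1 + e2 + e3 = s"
    using m(1) me by (simp add: monomials_of_deg_def)
  ultimately have "m = (0, 0, 0, s)"
    using me by auto
  with m(2) assms show False
    by simp
qed

lemma param_poly_nonzero: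
  assumes F: "homog_poly s F" and not_dvd: "\<not> pdvd (quadric_poly a b c) F"
  shows "param_poly s F \<noteq> 0"
proof
  assume P0: "param_poly s F = 0"
  have "heval s (\<lambda>m. to_ac (F m)) (1, y1, y2, QL y1 y2) = 0" for y1 y2
  proof -
    define z where "z = y1 - \<omega> * y2"
    define w where "w = y1 - \<omega>' * y2"
    have y2: "(w - z) / (\<omega> - \<omega>') = y2"
      unfolding z_def w_def using \<omega>'_neq_\<omega> by (simp add: field_simps)
    have "poly (poly (param_poly s F) [:w:]) z = 0"
      using P0 by simp
    moreover have "z + \<omega> * y2 = y1" and "to_ac a * z * w = QL y1 y2"
      unfolding QL_split z_def w_def by simp_all
    ultimately show ?thesis
      unfolding eval_param_poly y2 by simp
  qed
  with pdvd_quadric_if_vanishing[OF a_nonzero F] not_dvd show False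
    by blast
qed

end

section \<open>Rational points\<close>

definition proj_class :: "'a::field pt4 \<Rightarrow> 'a pt4 set" where
  "proj_class x = {smult4 t x | t. t \<noteq> 0}"

lemma smult4_in_proj_class: "(t::'a::field) \<noteq> 0 \<Longrightarrow> smult4 t x \<in> proj_class x"
  unfolding proj_class_def by blast

lemma proj_class_smult4:
  assumes "(t::'a::field) \<noteq> 0"
  shows "proj_class (smult4 t x) = proj_class x"
proof -
  have smult4_smult4: "smult4 u (smult4 v x) = smult4 (u * v) x" for u v :: 'a
    by (cases x) (simp add: mult.assoc)
  show ?thesis
    unfolding proj_class_def
  proof (intro equalityI subsetI)
    fix y assume "y \<in> {smult4 u (smult4 t x) |u. u \<noteq> 0}"
    thus "y \<in> {smult4 u x |u. u \<noteq> 0}"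
      using assms by (auto simp: smult4_smult4)
  next
    fix y assume "y \<in> {smult4 u x |u. u \<noteq> 0}"
    then obtain u where "y = smult4 u x" "u \<noteq> 0"
      by auto
    hence "y = smult4 (u / t) (smult4 t x)" "u / t \<noteq> 0"
      using assms by (auto simp: smult4_smult4)
    thus "y \<in> {smult4 u (smult4 t x) |u. u \<noteq> 0}"
      by blast
  qed
qed

context elliptic_quadric
begin

definition affine_zeros :: "nat \<Rightarrow> 'a mpoly4 \<Rightarrow> ('a \<times> 'a) set" where
  "affine_zeros s F = {y. heval s F (1, fst y, snd y, qform a b c (fst y) (snd y)) = 0}"

lemma X_points_subset:
  "X_points a b c s F \<subseteq>
     (\<lambda>y. proj_class (1, fst y, snd y, qform a b c (fst y) (snd y))) ` affine_zeros s F
     \<union> (if F (0, 0, 0, s) = 0 then {proj_class (0, 0, 0, 1)} else {})" (is "_ \<subseteq> ?R")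
proof
  fix P assume "P \<in> X_points a b c s F"
  then obtain x where P: "P = proj_class x" and "x \<noteq> (0, 0, 0, 0)"
    and on_X: "\<forall>x'\<in>P. heval 2 (quadric_poly a b c) x' = 0 \<and> heval s F x' = 0"
    unfolding X_points_def proj_points3_def proj_class_def by blast
  obtain x0 x1 x2 x3 where x: "x = (x0, x1, x2, x3)"
    by (cases x) auto
  have "x \<in> P"
    using P smult4_in_proj_class[of 1 x] x by simp
  hence "heval 2 (quadric_poly a b c) x = 0"
    using on_X by blast
  hence quadric: "x0 * x3 = qform a b c x1 x2"
    unfolding x heval_quadric_poly by simp
  show "P \<in> ?R"
  proof (cases "x0 = 0")
    case False
    define y where "y = (x1 / x0, x2 / x0)"
    have "qform a b c (fst y) (snd y) = x3 / x0"
      using False quadric unfolding y_def qform_def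
      by (simp add: field_simps power2_eq_square)
    hence normal: "smult4 (1 / x0) x = (1, fst y, snd y, qform a b c (fst y) (snd y))"
      using False by (simp add: x y_def)
    have "smult4 (1 / x0) x \<in> P"
      using P smult4_in_proj_class[of "1 / x0" x] False by simp
    hence "heval s F (smult4 (1 / x0) x) = 0"
      using on_X by blast
    hence "y \<in> affine_zeros s F"
      unfolding affine_zeros_def normal by simp
    moreover have "P = proj_class (1, fst y, snd y, qform a b c (fst y) (snd y))"
      using P proj_class_smult4[of "1 / x0" x] False normal by simp
    ultimately show ?thesis
      by blast
  next
    case True
    hence "x1 = 0 \<and> x2 = 0"
      using quadric anisotropic[of x1 x2] by simp
    with True x \<open>x \<noteq> (0, 0, 0, 0)\<close> have "x3 \<noteq> 0" and normal: "smult4 (1 / x3) x = (0, 0, 0, 1)"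
      by auto
    have "smult4 (1 / x3) x \<in> P"
      using P smult4_in_proj_class[of "1 / x3" x] \<open>x3 \<noteq> 0\<close> by simp
    hence "heval s F (smult4 (1 / x3) x) = 0"
      using on_X by blast
    hence "F (0, 0, 0, s) = 0"
      unfolding normal heval_at_infinity .
    moreover have "P = proj_class (0, 0, 0, 1)"
      using P proj_class_smult4[of "1 / x3" x] \<open>x3 \<noteq> 0\<close> normal by simp
    ultimately show ?thesis
      by simp
  qed
qed

text \<open>The coordinate z = y1 - \<omega> y2 of a rational pair; it determines the pair since \<omega>
  is not rational, and the conjugate coordinate is w = z^q.\<close>
definition zcoord :: "'a \<times> 'a \<Rightarrow> 'a alg_closure" where
  "zcoord y = to_ac (fst y) - \<omega> * to_ac (snd y)"

lemma inj_zcoord: "inj zcoord"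
proof (rule injI)
  fix y y' assume eq: "zcoord y = zcoord y'"
  show "y = y'"
  proof (cases "snd y = snd y'")
    case True
    thus ?thesis
      using eq by (simp add: zcoord_def prod_eq_iff)
  next
    case False
    from eq have "to_ac (fst y - fst y') = \<omega> * to_ac (snd y - snd y')"
      by (simp add: zcoord_def algebra_simps)
    hence "\<omega> = to_ac ((fst y - fst y') / (snd y - snd y'))"
      using False by (simp add: field_simps)
    thus ?thesis
      using \<omega>_not_rational by blast
  qed
qed

lemma zcoord_frobenius: "zcoord y ^ CARD('a) = to_ac (fst y) - \<omega>' * to_ac (snd y)"
  unfolding zcoord_def \<omega>'_def by (simp add: frobenius_diff power_mult_distrib frobenius_to_ac)

definition frob_restriction :: "nat \<Rightarrow> 'a mpoly4 \<Rightarrow> 'a alg_closure poly" where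
  "frob_restriction s F = poly (param_poly s F) (monom 1 CARD('a))"

lemma zcoord_root:
  assumes "y \<in> affine_zeros s F"
  shows "poly (frob_restriction s F) (zcoord y) = 0"
proof -
  let ?z = "zcoord y"
  have w: "poly (monom 1 CARD('a)) ?z = to_ac (fst y) - \<omega>' * to_ac (snd y)"
    by (simp add: poly_monom zcoord_frobenius)
  have y2: "(poly (monom 1 CARD('a)) ?z - ?z) / (\<omega> - \<omega>') = to_ac (snd y)"
    unfolding w using \<omega>'_neq_\<omega> by (simp add: zcoord_def field_simps)
  have y1: "?z + \<omega> * to_ac (snd y) = to_ac (fst y)"
    by (simp add: zcoord_def)
  have y3: "to_ac a * ?z * poly (monom 1 CARD('a)) ?z = to_ac (qform a b c (fst y) (snd y))"
    unfolding w using QL_split[of "to_ac (fst y)" "to_ac (snd y)"] by (simp add: zcoord_def qform_def)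
  have "poly (frob_restriction s F) ?z = poly (poly (param_poly s F) [:poly (monom 1 CARD('a)) ?z:]) ?z"
    unfolding frob_restriction_def by (rule poly_poly_inner_eval)
  also have "\<dots> =
      heval s (\<lambda>m. to_ac (F m)) (to_ac 1, to_ac (fst y), to_ac (snd y), to_ac (qform a b c (fst y) (snd y)))"
    unfolding eval_param_poly y2 y1 y3 by simp
  also have "\<dots> = to_ac (heval s F (1, fst y, snd y, qform a b c (fst y) (snd y)))"
    by (rule rhom_heval[OF rhom_to_ac, symmetric])
  finally show ?thesis
    using assms unfolding affine_zeros_def by simp
qed

lemma frob_restriction_nonzero:
  assumes "s < CARD('a)" and "homog_poly s F" and "\<not> pdvd (quadric_poly a b c) F"
  shows "frob_restriction s F \<noteq> 0"
  unfolding frob_restriction_def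
  using subst_power_nonzero[OF bideg_param_poly assms(1) param_poly_nonzero[OF assms(2,3)]] .

lemma degree_frob_restriction:
  assumes "s < CARD('a)" and "homog_poly s F" and "\<not> pdvd (quadric_poly a b c) F"
  shows "degree (frob_restriction s F) + (if F (0, 0, 0, s) = 0 then 1 else 0) \<le> s + CARD('a) * s"
proof -
  let ?G = "frob_restriction s F"
  have deg: "degree ?G \<le> s + CARD('a) * s"
    unfolding frob_restriction_def by (rule degree_subst_power[OF bideg_param_poly assms(1)])
  have "degree ?G \<noteq> s + CARD('a) * s" if "F (0, 0, 0, s) = 0"
  proof -
    have "coeff ?G (s + CARD('a) * s) = 0"
      unfolding frob_restriction_def top_coeff_subst_power[OF bideg_param_poly assms(1)]
      by (rule param_poly_top_coeff) (rule that)
    thus ?thesis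
      using frob_restriction_nonzero[OF assms] by (metis leading_coeff_0_iff)
  qed
  with deg show ?thesis
    by auto
qed

lemma card_affine_zeros:
  assumes "s < CARD('a)" and "homog_poly s F" and "\<not> pdvd (quadric_poly a b c) F"
  shows "card (affine_zeros s F) \<le> degree (frob_restriction s F)"
proof -
  have G: "frob_restriction s F \<noteq> 0"
    by (rule frob_restriction_nonzero[OF assms])
  have "card (affine_zeros s F) = card (zcoord ` affine_zeros s F)"
    using inj_zcoord by (simp add: card_image inj_on_subset)
  also have "\<dots> \<le> card {z. poly (frob_restriction s F) z = 0}"
    by (rule card_mono[OF poly_roots_finite[OF G]]) (auto intro: zcoord_root)
  also have "\<dots> \<le> degree (frob_restriction s F)"
    by (rule card_poly_roots_bound[OF G])
  finally show ?thesis .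
qed

theorem card_X_points:
  assumes "s < CARD('a)" and "homog_poly s F" and "\<not> pdvd (quadric_poly a b c) F"
  shows "card (X_points a b c s F) \<le> s * (CARD('a) + 1)"
proof -
  let ?E = "if F (0, 0, 0, s) = 0 then {proj_class (0, 0, 0, 1 :: 'a)} else {}"
  have "card (X_points a b c s F) \<le>
      card ((\<lambda>y. proj_class (1, fst y, snd y, qform a b c (fst y) (snd y))) ` affine_zeros s F \<union> ?E)"
    by (rule card_mono[OF _ X_points_subset]) simp
  also have "\<dots> \<le> card (affine_zeros s F) + card ?E"
    by (rule order.trans[OF card_Un_le add_right_mono[OF card_image_le]]) simp
  also have "\<dots> \<le> degree (frob_restriction s F) + (if F (0, 0, 0, s) = 0 then 1 else 0)"
    using card_affine_zeros[OF assms] by simp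
  also have "\<dots> \<le> s * (CARD('a) + 1)"
    using degree_frob_restriction[OF assms] by (simp add: algebra_simps)
  finally show ?thesis .
qed

end

theorem corollary3p7:
  fixes a b c :: "'a::{finite, field}" and s :: nat and F :: "'a mpoly4"
  assumes "irred_qform a b c"
    and "int s < int CARD('a) - 1"
    and "homog_poly s F"
    and "F \<noteq> (\<lambda>_. 0)"
    and "\<not> pdvd (quadric_poly a b c) F"
  shows "card (X_points a b c s F) \<le> s * (CARD('a) + 1)"
proof -
  interpret elliptic_quadric a b c
    by unfold_locales (rule assms(1))
  have "s < CARD('a)"
    using assms(2) by linarith
  thus ?thesis
    by (rule card_X_points[OF _ assms(3,5)])
qed

end
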